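(* Let $T>0$ and let $(\Omega,(\mathcal{F}_t)_{t\in[0,T]},P)$ be a filtered probability space satisfying the usual conditions, with $\mathcal{F}_0$ trivial. Let $\mathcal{O}\subset\mathbb{R}^n$ be open and let $S=(S(t))_{t\in[0,T]}$ be a continuous adapted process with values in $\mathcal{O}$ having conditional full support in $\mathcal{O}$. Let $\tau$ be a stopping time and let $Q_{S|\mathcal{F}_\tau}$ denote a regular version of the conditional distribution of $S$ (as a $C([0,T],\mathcal{O})$-valued random element) given $\mathcal{F}_\tau$. Then almost surely \[ \operatorname{supp}Q_{S|\mathcal{F}_\tau}=\{g\in C([0,T],\mathcal{O}):\ g|_{[0,\tau]}=S|_{[0,\tau]}\}. \]
   Context: $C([0,T],\mathcal{O})$ carries the topology of uniform convergence. Conditional full support: $S$ has conditional full support in $\mathcal{O}$ if for all $t\in[0,T]$ and every open set $G\subset C([0,T],\mathcal{O})$, $P(S\in G\mid\mathcal{F}_t)>0$ almost surely on the event $\{S|_{[0,t]}\in\{g|_{[0,t]}: g\in G\}\}$. *)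

theory Defs
  imports "HOL-Analysis.Analysis" "HOL-Probability.Probability"
begin

text \<open>The path space C([0,T],Dom) with the topology of uniform convergence:
  continuous maps [0,T] -> Dom (extensional outside [0,T]) with the sup metric.\<close>
definition path_space :: "real \<Rightarrow> 'b::metric_space set \<Rightarrow> (real \<Rightarrow> 'b) metric" where
  "path_space T Dom = cfunspace (top_of_set {0..T}) (submetric euclidean_metric Dom)"

definition borel_of_top :: "'p topology \<Rightarrow> 'p measure" where
  "borel_of_top X = sigma (topspace X) {U. openin X U}"

definition path_of :: "real \<Rightarrow> (real \<Rightarrow> 'a \<Rightarrow> 'b) \<Rightarrow> 'a \<Rightarrow> (real \<Rightarrow> 'b)" where
  "path_of T S \<omega> = restrict (\<lambda>t. S t \<omega>) {0..T}"

definition supp_of :: "'p topology \<Rightarrow> 'p measure \<Rightarrow> 'p set" where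
  "supp_of X \<mu> = {g \<in> topspace X. \<forall>U. openin X U \<and> g \<in> U \<longrightarrow> emeasure \<mu> U > 0}"

definition usual_conditions :: "'a measure \<Rightarrow> (real \<Rightarrow> 'a measure) \<Rightarrow> real \<Rightarrow> bool" where
  "usual_conditions M F T \<longleftrightarrow>
     (\<forall>N A. A \<in> sets M \<and> emeasure M A = 0 \<and> N \<subseteq> A \<longrightarrow> N \<in> sets (F 0)) \<and>
     (\<forall>t\<in>{0..<T}. sets (F t) = (\<Inter>s\<in>{t<..T}. sets (F s)))"

definition cond_full_support ::
    "'a measure \<Rightarrow> (real \<Rightarrow> 'a measure) \<Rightarrow> real \<Rightarrow> 'b::metric_space set \<Rightarrow> (real \<Rightarrow> 'a \<Rightarrow> 'b) \<Rightarrow> bool" where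
  "cond_full_support M F T Dom S \<longleftrightarrow>
     (\<forall>t\<in>{0..T}. \<forall>G. openin (mtopology_of (path_space T Dom)) G \<longrightarrow>
        (AE \<omega> in M. (\<exists>g\<in>G. \<forall>s\<in>{0..t}. g s = S s \<omega>) \<longrightarrow>
           real_cond_exp M (F t) (indicator {\<omega>\<in>space M. path_of T S \<omega> \<in> G}) \<omega> > 0))"

definition regular_cond_dist ::
    "'a measure \<Rightarrow> 'a measure \<Rightarrow> ('a \<Rightarrow> 'p) \<Rightarrow> 'p measure \<Rightarrow> ('a \<Rightarrow> 'p measure) \<Rightarrow> bool" where
  "regular_cond_dist M G X N Q \<longleftrightarrow>
     (\<forall>\<omega>\<in>space M. prob_space (Q \<omega>) \<and> sets (Q \<omega>) = sets N) \<and>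
     (\<forall>B\<in>sets N. (\<lambda>\<omega>. measure (Q \<omega>) B) \<in> borel_measurable G \<and>
        (AE \<omega> in M. measure (Q \<omega>) B = real_cond_exp M G (indicator (X -` B \<inter> space M)) \<omega>))"

end

theory Submission
  imports Defs
begin

text \<open>A path that leaves \<open>S(\<omega>)\<close> somewhere before \<open>\<tau>(\<omega>)\<close> lies in an evaluation ball
  \<open>{h. dist (h q) c < e}\<close>, with rational \<open>q \<le> \<tau>(\<omega>)\<close>, that \<open>S(\<omega>)\<close> misses; the event
  \<open>{q \<le> \<tau>} \<inter> {S(q) far from c}\<close> is \<open>F\<^sub>\<tau>\<close>-measurable and avoids the ball, so the ball has
  conditional probability zero there. Conversely, a path agreeing with \<open>S(\<omega>)\<close> up to \<open>\<tau>(\<omega>)\<close> can be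
  moved, within any neighbourhood, to a path agreeing with \<open>S(\<omega>)\<close> up to a rational time
  \<open>t \<ge> \<tau>(\<omega>)\<close>. On the \<open>F\<^sub>t\<close>-event \<open>{\<tau> \<le> t}\<close> where a neighbourhood gets conditional
  probability zero, the path a.s. does not enter it, which conditional full support at time \<open>t\<close>
  forbids. Both families of sets are countable, so the exceptional null sets can be collected.\<close>

section \<open>The path space\<close>

lemma mspace_path_space:
  "mspace (path_space T Dom) =
     {g. (\<forall>t\<in>{0..T}. g t \<in> Dom) \<and> g \<in> extensional {0..T} \<and> continuous_on {0..T} g}"
proof -
  have c: "compactin (top_of_set {0..T}) (topspace (top_of_set {0..T}))"
    by (simp add: compactin_subtopology)
  show ?thesis
    unfolding path_space_def compactin_mspace_cfunspace[OF c]
    by (auto simp: mtopology_of_submetric continuous_map_in_subtopology)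
qed

lemma mdist_path_space_le:
  assumes "g \<in> mspace (path_space T Dom)" "h \<in> mspace (path_space T Dom)" "0 \<le> B"
    and "\<And>t. t \<in> {0..T} \<Longrightarrow> dist (g t) (h t) \<le> B"
  shows "mdist (path_space T Dom) g h \<le> B"
  unfolding path_space_def using assms by (intro mdist_cfunspace_le) auto

lemma dist_le_mdist_path_space:
  assumes "g \<in> mspace (path_space T Dom)" "h \<in> mspace (path_space T Dom)" "t \<in> {0..T}"
  shows "dist (g t) (h t) \<le> mdist (path_space T Dom) g h"
  using mdist_cfunspace_imp_mdist_le[of g "top_of_set {0..T}" "submetric euclidean_metric Dom" h
      "mdist (path_space T Dom) g h" t] assms
  unfolding path_space_def by auto

lemma openin_path_space:
  "openin (mtopology_of (path_space T Dom)) U \<longleftrightarrow> U \<subseteq> mspace (path_space T Dom) \<and>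
     (\<forall>g\<in>U. \<exists>r>0. \<forall>h\<in>mspace (path_space T Dom). mdist (path_space T Dom) g h < r \<longrightarrow> h \<in> U)"
proof -
  interpret Metric_space "mspace (path_space T Dom)" "mdist (path_space T Dom)"
    by (rule Metric_space_mspace_mdist)
  show ?thesis
    unfolding mtopology_of_def openin_mtopology mball_def by blast
qed

lemma openin_imp_sets_borel_of_top: "openin X U \<Longrightarrow> U \<in> sets (borel_of_top X)"
  unfolding borel_of_top_def using openin_subset[of X]
  by (subst sets_measure_of) (auto intro: sigma_sets.Basic)

definition path_eval_ball :: "real \<Rightarrow> 'b::metric_space set \<Rightarrow> real \<Rightarrow> 'b \<Rightarrow> real \<Rightarrow> (real \<Rightarrow> 'b) set"
  where "path_eval_ball T Dom q c e = {h \<in> mspace (path_space T Dom). dist (h q) c < e}"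

lemma openin_path_eval_ball:
  assumes "q \<in> {0..T}"
  shows "openin (mtopology_of (path_space T Dom)) (path_eval_ball T Dom q c e)"
  unfolding openin_path_space
proof (intro conjI ballI)
  show "path_eval_ball T Dom q c e \<subseteq> mspace (path_space T Dom)"
    by (auto simp: path_eval_ball_def)
  fix g assume g: "g \<in> path_eval_ball T Dom q c e"
  show "\<exists>r>0. \<forall>h\<in>mspace (path_space T Dom).
      mdist (path_space T Dom) g h < r \<longrightarrow> h \<in> path_eval_ball T Dom q c e"
  proof (intro exI[of _ "e - dist (g q) c"] conjI ballI impI)
    show "0 < e - dist (g q) c" using g by (auto simp: path_eval_ball_def)
    fix h assume h: "h \<in> mspace (path_space T Dom)" "mdist (path_space T Dom) g h < e - dist (g q) c"
    have "dist (h q) c \<le> dist (g q) (h q) + dist (g q) c"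
      by (metis dist_commute dist_triangle)
    also have "dist (g q) (h q) \<le> mdist (path_space T Dom) g h"
      using g h assms by (intro dist_le_mdist_path_space) (auto simp: path_eval_ball_def)
    finally show "h \<in> path_eval_ball T Dom q c e"
      using h by (auto simp: path_eval_ball_def)
  qed
qed

text \<open>A countable family of open sets forming a neighbourhood base at every path: the values at
  the grid points \<open>i T / N\<close> are prescribed up to \<open>e\<close> by points of \<open>cs\<close>, and the oscillation over
  mesh-sized steps is at most \<open>e\<close>. The slack \<open>\<delta>\<close> makes both conditions open.\<close>

definition grid_nbhd :: "real \<Rightarrow> 'b::metric_space set \<Rightarrow> nat \<Rightarrow> 'b list \<Rightarrow> real \<Rightarrow> (real \<Rightarrow> 'b) set"
  where "grid_nbhd T Dom N cs e = {h \<in> mspace (path_space T Dom). \<exists>\<delta>>0.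
     (\<forall>i\<le>N. dist (h (real i * T / real N)) (cs!i) \<le> e - \<delta>) \<and>
     (\<forall>s\<in>{0..T}. \<forall>u\<in>{0..T}. \<bar>s - u\<bar> \<le> T / real N \<longrightarrow> dist (h s) (h u) \<le> e - \<delta>)}"

lemma grid_point_in_interval: "0 \<le> T \<Longrightarrow> i \<le> N \<Longrightarrow> real i * T / real N \<in> {0..T}"
  by (cases "N = 0") (auto simp: field_simps mult_left_mono)

lemma grid_point_near:
  assumes "0 < T" "0 < N" "s \<in> {0..T}"
  obtains i where "i \<le> N" "\<bar>s - real i * T / real N\<bar> \<le> T / real N"
proof -
  define x where "x = s * real N / T"
  define i where "i = nat \<lfloor>x\<rfloor>"
  have "0 \<le> x" "x \<le> real N"
    using assms by (auto simp: x_def field_simps mult_right_mono)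
  then have "real i \<le> x" "x < real i + 1" "i \<le> N"
    by (auto simp: i_def nat_le_iff floor_le_iff)
  then have "real i * T / real N \<le> s" "s < real i * T / real N + T / real N"
    using assms by (auto simp: x_def field_simps)
  then show ?thesis using that \<open>i \<le> N\<close> by force
qed

lemma openin_grid_nbhd:
  assumes "0 \<le> T"
  shows "openin (mtopology_of (path_space T Dom)) (grid_nbhd T Dom N cs e)"
  unfolding openin_path_space
proof (intro conjI ballI)
  show "grid_nbhd T Dom N cs e \<subseteq> mspace (path_space T Dom)"
    by (auto simp: grid_nbhd_def)
  fix g assume "g \<in> grid_nbhd T Dom N cs e"
  then obtain \<delta> where \<delta>: "\<delta> > 0" and g: "g \<in> mspace (path_space T Dom)"
    and grid: "\<forall>i\<le>N. dist (g (real i * T / real N)) (cs!i) \<le> e - \<delta>"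
    and osc: "\<forall>s\<in>{0..T}. \<forall>u\<in>{0..T}. \<bar>s - u\<bar> \<le> T / real N \<longrightarrow> dist (g s) (g u) \<le> e - \<delta>"
    by (auto simp: grid_nbhd_def)
  show "\<exists>r>0. \<forall>h\<in>mspace (path_space T Dom).
      mdist (path_space T Dom) g h < r \<longrightarrow> h \<in> grid_nbhd T Dom N cs e"
  proof (intro exI[of _ "\<delta>/4"] conjI ballI impI)
    fix h assume h: "h \<in> mspace (path_space T Dom)" "mdist (path_space T Dom) g h < \<delta>/4"
    have near: "dist (h t) (g t) < \<delta>/4" if "t \<in> {0..T}" for t
      using dist_le_mdist_path_space[OF g h(1) that] h(2) by (simp add: dist_commute)
    have "dist (h (real i * T / real N)) (cs!i) \<le> e - \<delta>/2" if "i \<le> N" for i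
      using dist_triangle[of "h (real i * T / real N)" "cs!i" "g (real i * T / real N)"]
        near[OF grid_point_in_interval[OF assms that]] grid[rule_format, OF that] \<delta> by linarith
    moreover have "dist (h s) (h u) \<le> e - \<delta>/2"
      if "s \<in> {0..T}" "u \<in> {0..T}" "\<bar>s - u\<bar> \<le> T / real N" for s u
      using dist_triangle[of "h s" "h u" "g s"] dist_triangle[of "g s" "h u" "g u"]
        near[OF that(1)] near[OF that(2)] osc that by (fastforce simp: dist_commute)
    ultimately show "h \<in> grid_nbhd T Dom N cs e"
      using h \<delta> unfolding grid_nbhd_def by (intro CollectI conjI exI[of _ "\<delta>/2"]) auto
  qed (use \<delta> in simp)
qed

lemma mdist_le_grid_nbhd:
  assumes "0 < T" "0 < N"
    and g: "g \<in> grid_nbhd T Dom N cs e" and h: "h \<in> grid_nbhd T Dom N cs e"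
  shows "mdist (path_space T Dom) g h \<le> 4 * e"
proof -
  have bounds: "f \<in> mspace (path_space T Dom) \<and> 0 \<le> e \<and>
      (\<forall>i\<le>N. dist (f (real i * T / real N)) (cs!i) \<le> e) \<and>
      (\<forall>s\<in>{0..T}. \<forall>u\<in>{0..T}. \<bar>s - u\<bar> \<le> T / real N \<longrightarrow> dist (f s) (f u) \<le> e)"
    if f: "f \<in> grid_nbhd T Dom N cs e" for f
  proof -
    obtain \<delta> where f\<delta>: "\<delta> > 0" "f \<in> mspace (path_space T Dom)"
      "\<forall>i\<le>N. dist (f (real i * T / real N)) (cs!i) \<le> e - \<delta>"
      "\<forall>s\<in>{0..T}. \<forall>u\<in>{0..T}. \<bar>s - u\<bar> \<le> T / real N \<longrightarrow> dist (f s) (f u) \<le> e - \<delta>"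
      using f by (auto simp: grid_nbhd_def)
    moreover have "\<delta> \<le> e"
      using f\<delta>(3)[rule_format, of 0] zero_le_dist[of "f (real 0 * T / real N)" "cs!0"] by linarith
    ultimately show ?thesis
      by (intro conjI allI impI ballI; fastforce)
  qed
  show ?thesis
  proof (rule mdist_path_space_le)
    fix s assume s: "s \<in> {0..T}"
    obtain i where i: "i \<le> N" "\<bar>s - real i * T / real N\<bar> \<le> T / real N"
      using grid_point_near[OF assms(1,2) s] .
    define t where "t = real i * T / real N"
    have t: "t \<in> {0..T}" "\<bar>s - t\<bar> \<le> T / real N"
      using grid_point_in_interval[of T i N] assms(1) i by (auto simp: t_def)
    have "dist (g s) (g t) \<le> e" "dist (h t) (h s) \<le> e"
      using bounds[OF g] bounds[OF h] s t by (auto simp: dist_commute)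
    moreover have "dist (g t) (cs!i) \<le> e" "dist (cs!i) (h t) \<le> e"
      using bounds[OF g] bounds[OF h] i(1) unfolding t_def by (auto simp: dist_commute)
    ultimately show "dist (g s) (h s) \<le> 4 * e"
      using dist_triangle[of "g s" "h s" "g t"] dist_triangle[of "g t" "h s" "cs!i"]
        dist_triangle[of "cs!i" "h s" "h t"] by linarith
  qed (use bounds[OF g] bounds[OF h] in auto)
qed

lemma grid_nbhds_local_base:
  fixes D :: "'b::metric_space set"
  assumes "0 < T" and g: "g \<in> mspace (path_space T Dom)" and "0 < \<rho>"
    and dense: "\<And>x e. 0 < e \<Longrightarrow> \<exists>d\<in>D. dist x d < e"
  obtains N cs k where "cs \<in> lists D" "g \<in> grid_nbhd T Dom N cs (1 / real (Suc k))"
    "\<And>h. h \<in> grid_nbhd T Dom N cs (1 / real (Suc k)) \<Longrightarrow> mdist (path_space T Dom) g h < \<rho>"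
proof -
  obtain k :: nat where k: "inverse (real (Suc k)) < \<rho> / 4"
    using reals_Archimedean \<open>0 < \<rho>\<close> by (metis zero_less_divide_iff zero_less_numeral)
  define e where "e = 1 / real (Suc k)"
  have e: "0 < e" "4 * e < \<rho>"
    using k by (simp_all add: e_def field_simps)
  have "uniformly_continuous_on {0..T} g"
    using g by (intro compact_uniformly_continuous) (auto simp: mspace_path_space)
  then obtain d where "d > 0"
    and d: "\<And>s u. s \<in> {0..T} \<Longrightarrow> u \<in> {0..T} \<Longrightarrow> dist s u < d \<Longrightarrow> dist (g s) (g u) < e/2"
    unfolding uniformly_continuous_on_def using e by (meson half_gt_zero)
  obtain N :: nat where N: "T / d < real N"
    using reals_Archimedean2 by blast
  have "0 < N"
    using N \<open>0 < T\<close> \<open>d > 0\<close> by (metis divide_pos_pos of_nat_0_less_iff order.strict_trans)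
  then have "T / real N < d"
    using N \<open>d > 0\<close> by (simp add: field_simps)
  have "\<forall>i. \<exists>c. c \<in> D \<and> dist (g (real i * T / real N)) c < e/2"
    using dense e by (meson half_gt_zero)
  then obtain c where c: "\<And>i. c i \<in> D \<and> dist (g (real i * T / real N)) (c i) < e/2"
    by metis
  define cs where "cs = map c [0..<Suc N]"
  have cs: "cs!i = c i" if "i \<le> N" for i
    using that unfolding cs_def by (simp del: upt_Suc)
  have "g \<in> grid_nbhd T Dom N cs e"
    unfolding grid_nbhd_def
  proof (intro CollectI conjI exI[of _ "e/2"] allI impI ballI g)
    fix s u assume "s \<in> {0..T}" "u \<in> {0..T}" "\<bar>s - u\<bar> \<le> T / real N"
    then show "dist (g s) (g u) \<le> e - e/2"
      using d[of s u] \<open>T / real N < d\<close> by (simp add: dist_real_def)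
  qed (use c cs e in \<open>auto intro: less_imp_le\<close>)
  moreover have "cs \<in> lists D"
    using c by (auto simp: cs_def)
  moreover have "mdist (path_space T Dom) g h < \<rho>" if "h \<in> grid_nbhd T Dom N cs e" for h
    using mdist_le_grid_nbhd[OF \<open>0 < T\<close> \<open>0 < N\<close> \<open>g \<in> grid_nbhd T Dom N cs e\<close> that] e by linarith
  ultimately show ?thesis
    using that unfolding e_def by blast
qed

text \<open>Stop the difference \<open>x - g\<close> at a time \<open>t\<close> slightly after \<open>\<tau>\<close> and add it to \<open>g\<close>: the difference
  vanishes up to \<open>\<tau>\<close>, so by continuity it stays small, and a uniform margin around the compact
  image of \<open>g\<close> keeps the new path inside \<open>Dom\<close>.\<close>

lemma path_agreeing_beyond:
  fixes x :: "real \<Rightarrow> 'b::real_normed_vector"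
  assumes "open Dom" and x: "continuous_on {0..T} x" "\<forall>s\<in>{0..T}. x s \<in> Dom"
    and g: "g \<in> mspace (path_space T Dom)" and agree: "\<forall>s\<in>{0..\<tau>}. g s = x s"
    and \<tau>: "\<tau> \<in> {0..T}" and "0 < \<rho>"
  obtains t h where "t \<in> (\<rat> \<inter> {0..T}) \<union> {T}" "\<tau> \<le> t" "h \<in> mspace (path_space T Dom)"
    "mdist (path_space T Dom) g h < \<rho>" "\<forall>s\<in>{0..t}. h s = x s"
proof (cases "\<tau> = T")
  case True
  have "mdist (path_space T Dom) g g < \<rho>"
    using mdist_path_space_le[OF g g, of 0] \<open>0 < \<rho>\<close> by simp
  then show ?thesis
    using that[of T g] True g agree by auto
next
  case False
  have g_cont: "continuous_on {0..T} g" and g_dom: "g ` {0..T} \<subseteq> Dom"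
    using g by (auto simp: mspace_path_space)
  have "compact (g ` {0..T})"
    by (intro compact_continuous_image g_cont compact_Icc)
  then obtain \<epsilon> where "\<epsilon> > 0" and "(\<Union>y\<in>g ` {0..T}. cball y \<epsilon>) \<subseteq> Dom"
    by (rule compact_subset_open_imp_cball_epsilon_subset[OF _ \<open>open Dom\<close> g_dom])
  then have margin: "y \<in> Dom" if "s \<in> {0..T}" "dist (g s) y \<le> \<epsilon>" for s y
    using that by (meson UN_I imageI mem_cball subsetD)
  define \<eta> where "\<eta> = min \<rho> \<epsilon> / 2"
  have \<eta>: "0 < \<eta>" "\<eta> < \<rho>" "\<eta> < \<epsilon>"
    using \<open>\<epsilon> > 0\<close> \<open>0 < \<rho>\<close> by (auto simp: \<eta>_def)
  have "continuous_on {0..T} (\<lambda>u. x u - g u)"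
    using x g_cont by (intro continuous_on_diff)
  then obtain \<theta> where "\<theta> > 0"
    and \<theta>: "\<forall>u\<in>{0..T}. dist u \<tau> < \<theta> \<longrightarrow> dist (x u - g u) (x \<tau> - g \<tau>) < \<eta>"
    using \<tau> \<eta> unfolding continuous_on_iff by blast
  obtain t where t: "t \<in> \<rat>" "\<tau> < t" "t < min (\<tau> + \<theta>) T"
    using Rats_dense_in_real[of \<tau> "min (\<tau> + \<theta>) T"] False \<tau> \<open>\<theta> > 0\<close> by auto
  then have "t \<in> {0..T}"
    using \<tau> by auto
  define h where "h = restrict (\<lambda>s. g s + (x (min s t) - g (min s t))) {0..T}"
  have close: "dist (g s) (h s) \<le> \<eta>" if "s \<in> {0..T}" for s
  proof (cases "min s t \<le> \<tau>")
    case True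
    then have "g (min s t) = x (min s t)"
      using that agree \<open>t \<in> {0..T}\<close> by simp
    then show ?thesis
      using that \<eta> by (simp add: h_def)
  next
    case False
    then have "dist (x (min s t) - g (min s t)) (x \<tau> - g \<tau>) < \<eta>"
      using \<theta> that t \<open>t \<in> {0..T}\<close> by (auto simp: dist_real_def)
    then show ?thesis
      using that agree \<tau> by (simp add: h_def dist_norm norm_minus_commute)
  qed
  have "continuous_on {0..T} (\<lambda>s. min s t)" "(\<lambda>s. min s t) ` {0..T} \<subseteq> {0..T}"
    using \<open>t \<in> {0..T}\<close> by (auto intro!: continuous_intros)
  then have "continuous_on {0..T} (\<lambda>s. g s + (x (min s t) - g (min s t)))"
    by (intro continuous_on_add continuous_on_diff g_cont continuous_on_compose2[OF x(1)]
        continuous_on_compose2[OF g_cont])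
  then have "continuous_on {0..T} h"
    by (rule continuous_on_eq) (simp add: h_def)
  moreover have "h s \<in> Dom" if "s \<in> {0..T}" for s
    using margin[OF that] close[OF that] \<eta> by simp
  ultimately have h: "h \<in> mspace (path_space T Dom)"
    by (auto simp: mspace_path_space h_def)
  have "mdist (path_space T Dom) g h < \<rho>"
    using mdist_path_space_le[OF g h, of \<eta>] close \<eta> by fastforce
  moreover have "\<forall>s\<in>{0..t}. h s = x s"
    using \<open>t \<in> {0..T}\<close> by (auto simp: h_def)
  ultimately show ?thesis
    using that[of t h] t \<open>t \<in> {0..T}\<close> h by auto
qed

lemma rational_point_of_disagreement:
  fixes g x :: "real \<Rightarrow> 'b::metric_space"
  assumes "continuous_on {0..T} g" "continuous_on {0..T} x" "s \<in> {0..T}" "g s \<noteq> x s"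
  obtains q where "q \<in> \<rat>" "q \<in> {0..s}" "g q \<noteq> x q"
proof (cases "s = 0")
  case True
  then show ?thesis
    using that assms(4) by auto
next
  case False
  have "continuous_on {0..T} (\<lambda>u. dist (g u) (x u))"
    using assms(1,2) by (intro continuous_intros)
  then obtain \<theta> where "\<theta> > 0"
    and \<theta>: "\<forall>u\<in>{0..T}. dist u s < \<theta> \<longrightarrow> dist (dist (g u) (x u)) (dist (g s) (x s)) < dist (g s) (x s)"
    using assms(3,4) unfolding continuous_on_iff by (metis zero_less_dist_iff)
  obtain q where q: "q \<in> \<rat>" "max 0 (s - \<theta>) < q" "q < s"
    using Rats_dense_in_real[of "max 0 (s - \<theta>)" s] False assms(3) \<open>\<theta> > 0\<close> by auto
  then have "dist (dist (g q) (x q)) (dist (g s) (x s)) < dist (g s) (x s)"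
    using \<theta> assms(3) by (auto simp: dist_real_def)
  then have "g q \<noteq> x q"
    by (auto simp: dist_real_def)
  then show ?thesis
    using that q by auto
qed

lemma dense_separating_center:
  assumes dense: "\<And>y e. 0 < e \<Longrightarrow> \<exists>d\<in>D. dist y d < e" and "a \<noteq> b"
  obtains c k where "c \<in> D" "dist a c < 1 / real (Suc k)" "2 / real (Suc k) \<le> dist b c"
proof -
  obtain k :: nat where k: "inverse (real (Suc k)) < dist a b / 4"
    using reals_Archimedean \<open>a \<noteq> b\<close> by (metis zero_less_divide_iff zero_less_numeral zero_less_dist_iff)
  obtain c where c: "c \<in> D" "dist a c < 1 / real (Suc k)"
    using dense[of "1 / real (Suc k)" a] by auto
  have "dist a b \<le> dist a c + dist b c"
    by (rule dist_triangle2)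
  moreover have "4 * (1 / real (Suc k)) < dist a b"
    using k by (simp add: field_simps)
  ultimately have "2 * (1 / real (Suc k)) \<le> dist b c"
    using c(2) by (smt (verit) of_nat_0_le_iff divide_nonneg_nonneg)
  then show ?thesis
    using that c by simp
qed

section \<open>Stopped \<sigma>-algebras and regular conditional distributions\<close>

lemma (in filtration) sets_pre_sigma_ge_const:
  assumes \<tau>: "stopping_time F \<tau>" and A: "A \<in> sets (F q)"
  shows "{\<omega>\<in>A. q \<le> \<tau> \<omega>} \<in> sets (pre_sigma \<tau>)"
proof (rule sets_pre_sigmaI[OF \<tau>])
  fix t
  show "{\<omega> \<in> {\<omega>\<in>A. q \<le> \<tau> \<omega>}. \<tau> \<omega> \<le> t} \<in> sets (F t)"
  proof (cases "q \<le> t")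
    case True
    have "A - {\<omega>\<in>space (F q). \<tau> \<omega> < q} \<in> sets (F q)"
      using A stopping_time_less_const[OF \<tau>, of q] by (auto simp: pred_def)
    then have "A - {\<omega>\<in>space (F q). \<tau> \<omega> < q} \<in> sets (F t)"
      using sets_F_mono[OF True] by blast
    moreover have "{\<omega>\<in>space (F t). \<tau> \<omega> \<le> t} \<in> sets (F t)"
      using stopping_timeD[OF \<tau>, of t] by (simp add: pred_def)
    ultimately have "(A - {\<omega>\<in>space (F q). \<tau> \<omega> < q}) \<inter> {\<omega>\<in>space (F t). \<tau> \<omega> \<le> t} \<in> sets (F t)"
      by blast
    also have "(A - {\<omega>\<in>space (F q). \<tau> \<omega> < q}) \<inter> {\<omega>\<in>space (F t). \<tau> \<omega> \<le> t} =
        {\<omega> \<in> {\<omega>\<in>A. q \<le> \<tau> \<omega>}. \<tau> \<omega> \<le> t}"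
      using sets.sets_into_space[OF A] by (auto simp: space_F)
    finally show ?thesis .
  next
    case False
    then have "{\<omega> \<in> {\<omega>\<in>A. q \<le> \<tau> \<omega>}. \<tau> \<omega> \<le> t} = {}"
      by auto
    then show ?thesis
      by (metis sets.empty_sets)
  qed
qed

lemma (in filtration) subalgebra_pre_sigma:
  assumes \<tau>: "stopping_time F \<tau>" and sub: "subalgebra M (F T)" and bounded: "\<forall>\<omega>\<in>\<Omega>. \<tau> \<omega> \<le> T"
  shows "subalgebra M (pre_sigma \<tau>)"
  unfolding subalgebra_def
proof
  have "space M = \<Omega>"
    using sub by (simp add: subalgebra_def space_F)
  then show "space (pre_sigma \<tau>) = space M"
    by (simp only: space_pre_sigma)
  show "sets (pre_sigma \<tau>) \<subseteq> sets M"
  proof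
    fix A assume A: "A \<in> sets (pre_sigma \<tau>)"
    have "{\<omega>\<in>A. \<tau> \<omega> \<le> T} = A"
      using sets.sets_into_space[OF A] bounded by (auto simp: space_pre_sigma)
    then show "A \<in> sets M"
      using sets_pre_sigmaD[OF \<tau> A, of T] sub by (auto simp: subalgebra_def)
  qed
qed

lemma (in finite_measure) real_cond_exp_indicator_AE_zero:
  assumes H: "subalgebra M H" and A: "A \<in> sets H" and E: "E \<in> sets M"
    and null: "measure M (A \<inter> E) = 0"
  shows "AE \<omega> in M. \<omega> \<in> A \<longrightarrow> real_cond_exp M H (indicator E) \<omega> = 0"
proof -
  interpret finite_measure_subalgebra M H
    using H by unfold_locales
  have "A \<in> sets M"
    using A H by (auto simp: subalgebra_def)
  have E_int: "integrable M (indicator E :: 'a \<Rightarrow> real)"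
    using E by (simp add: integrable_real_indicator emeasure_eq_measure)
  have "(\<integral>\<omega>. indicator A \<omega> * real_cond_exp M H (indicator E) \<omega> \<partial>M) = (\<integral>\<omega>\<in>A. indicator E \<omega> \<partial>M)"
    using real_cond_exp_intA[OF E_int A] by (simp add: set_lebesgue_integral_def)
  also have "\<dots> = measure M (A \<inter> E)"
    using \<open>A \<in> sets M\<close> E by (simp add: set_lebesgue_integral_def indicator_inter_arith[symmetric])
  finally have "(\<integral>\<omega>. indicator A \<omega> * real_cond_exp M H (indicator E) \<omega> \<partial>M) = 0"
    using null by simp
  moreover have "integrable M (\<lambda>\<omega>. indicator A \<omega> * real_cond_exp M H (indicator E) \<omega>)"
    using integrable_mult_indicator[OF \<open>A \<in> sets M\<close> real_cond_exp_int(1)[OF E_int]] by simp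
  moreover have "AE \<omega> in M. 0 \<le> indicator A \<omega> * real_cond_exp M H (indicator E) \<omega>"
    using real_cond_exp_pos[of "indicator E"] E by (auto simp: indicator_def)
  ultimately have "AE \<omega> in M. indicator A \<omega> * real_cond_exp M H (indicator E) \<omega> = 0"
    by (simp add: integral_nonneg_eq_0_iff_AE)
  then show ?thesis
    by eventually_elim (simp add: indicator_def)
qed

lemma (in finite_measure) regular_cond_dist_AE_zero:
  assumes G: "subalgebra M G" and Q: "regular_cond_dist M G X N Q"
    and X: "X \<in> measurable M N" and B: "B \<in> sets N" and A: "A \<in> sets G"
    and null: "measure M {\<omega>\<in>A. X \<omega> \<in> B} = 0"
  shows "AE \<omega> in M. \<omega> \<in> A \<longrightarrow> measure (Q \<omega>) B = 0"
proof -
  have "A \<subseteq> space M"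
    using sets.sets_into_space[OF A] G by (simp add: subalgebra_def)
  then have "A \<inter> (X -` B \<inter> space M) = {\<omega>\<in>A. X \<omega> \<in> B}"
    by blast
  then have "measure M (A \<inter> (X -` B \<inter> space M)) = 0"
    using null by simp
  then have "AE \<omega> in M. \<omega> \<in> A \<longrightarrow> real_cond_exp M G (indicator (X -` B \<inter> space M)) \<omega> = 0"
    using X B by (intro real_cond_exp_indicator_AE_zero[OF G A]) (rule measurable_sets)
  moreover have "AE \<omega> in M. measure (Q \<omega>) B = real_cond_exp M G (indicator (X -` B \<inter> space M)) \<omega>"
    using Q B by (simp add: regular_cond_dist_def)
  ultimately show ?thesis
    by eventually_elim simp
qed

lemma (in finite_measure) regular_cond_dist_null_where_zero:
  assumes G: "subalgebra M G" and Q: "regular_cond_dist M G X N Q"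
    and X: "X \<in> measurable M N" and B: "B \<in> sets N"
  shows "measure M {\<omega>\<in>space M. measure (Q \<omega>) B = 0 \<and> X \<omega> \<in> B} = 0"
proof -
  interpret finite_measure_subalgebra M G
    using G by unfold_locales
  define C where "C = {\<omega>\<in>space M. measure (Q \<omega>) B = 0}"
  define E where "E = X -` B \<inter> space M"
  have "(\<lambda>\<omega>. measure (Q \<omega>) B) \<in> borel_measurable G"
    using Q B unfolding regular_cond_dist_def by blast
  then have "(\<lambda>\<omega>. measure (Q \<omega>) B) -` {0} \<inter> space G \<in> sets G"
    by (rule measurable_sets) simp
  also have "(\<lambda>\<omega>. measure (Q \<omega>) B) -` {0} \<inter> space G = C"
    using G unfolding C_def subalgebra_def by blast
  finally have C_G: "C \<in> sets G" .
  then have C_M: "C \<in> sets M"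
    using G by (auto simp: subalgebra_def)
  have E_M: "E \<in> sets M"
    unfolding E_def using X B by (rule measurable_sets)
  have E_int: "integrable M (indicator E :: 'a \<Rightarrow> real)"
    using E_M by (simp add: integrable_real_indicator emeasure_eq_measure)
  have "{\<omega>\<in>space M. measure (Q \<omega>) B = 0 \<and> X \<omega> \<in> B} = C \<inter> E"
    by (auto simp: C_def E_def)
  then have "measure M {\<omega>\<in>space M. measure (Q \<omega>) B = 0 \<and> X \<omega> \<in> B} = (\<integral>\<omega>\<in>C. indicator E \<omega> \<partial>M)"
    using C_M E_M by (simp add: set_lebesgue_integral_def indicator_inter_arith[symmetric])
  also have "\<dots> = (\<integral>\<omega>. indicator C \<omega> * real_cond_exp M G (indicator E) \<omega> \<partial>M)"
    using real_cond_exp_intA[OF E_int C_G] by (simp add: set_lebesgue_integral_def)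
  also have "\<dots> = 0"
  proof (rule integral_eq_zero_AE)
    have "AE \<omega> in M. measure (Q \<omega>) B = real_cond_exp M G (indicator E) \<omega>"
      using Q B by (simp add: regular_cond_dist_def E_def)
    then show "AE \<omega> in M. indicator C \<omega> * real_cond_exp M G (indicator E) \<omega> = 0"
      by eventually_elim (simp add: C_def indicator_def)
  qed
  finally show ?thesis .
qed

section \<open>Supports of measures on the path space\<close>

lemma supp_of_subset_agreeing:
  fixes x :: "real \<Rightarrow> 'b::metric_space" and \<mu> :: "(real \<Rightarrow> 'b) measure"
  assumes "finite_measure \<mu>" and sets: "sets \<mu> = sets (borel_of_top (mtopology_of (path_space T Dom)))"
    and x: "continuous_on {0..T} x" and "\<tau> \<le> T"
    and dense: "\<And>y e. 0 < e \<Longrightarrow> \<exists>d\<in>D. dist y d < e"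
    and null: "\<And>q c k. q \<in> \<rat> \<Longrightarrow> q \<in> {0..T} \<Longrightarrow> c \<in> D \<Longrightarrow> q \<le> \<tau> \<Longrightarrow>
      2 / real (Suc k) \<le> dist (x q) c \<Longrightarrow> measure \<mu> (path_eval_ball T Dom q c (1 / real (Suc k))) = 0"
  shows "supp_of (mtopology_of (path_space T Dom)) \<mu> \<subseteq>
    {g \<in> mspace (path_space T Dom). \<forall>s\<in>{0..\<tau>}. g s = x s}"
proof
  fix g assume "g \<in> supp_of (mtopology_of (path_space T Dom)) \<mu>"
  then have g: "g \<in> mspace (path_space T Dom)"
    and charged: "\<And>U. openin (mtopology_of (path_space T Dom)) U \<Longrightarrow> g \<in> U \<Longrightarrow> 0 < emeasure \<mu> U"
    by (auto simp: supp_of_def)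
  have "g s = x s" if s: "s \<in> {0..\<tau>}" for s
  proof (rule ccontr)
    assume "g s \<noteq> x s"
    moreover have "continuous_on {0..T} g"
      using g by (simp add: mspace_path_space)
    ultimately obtain q where q: "q \<in> \<rat>" "q \<in> {0..s}" "g q \<noteq> x q"
      using rational_point_of_disagreement[OF _ x, of g s] s \<open>\<tau> \<le> T\<close> by auto
    then obtain c k where c: "c \<in> D" "dist (g q) c < 1 / real (Suc k)" "2 / real (Suc k) \<le> dist (x q) c"
      using dense_separating_center[OF dense] by metis
    have "q \<in> {0..T}"
      using q s \<open>\<tau> \<le> T\<close> by auto
    let ?V = "path_eval_ball T Dom q c (1 / real (Suc k))"
    have "openin (mtopology_of (path_space T Dom)) ?V"
      using \<open>q \<in> {0..T}\<close> by (rule openin_path_eval_ball)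
    moreover have "g \<in> ?V"
      using g c by (simp add: path_eval_ball_def)
    ultimately have "0 < emeasure \<mu> ?V"
      by (rule charged)
    moreover have "?V \<in> sets \<mu>"
      unfolding sets by (rule openin_imp_sets_borel_of_top) fact
    moreover have "measure \<mu> ?V = 0"
      using null[OF q(1) \<open>q \<in> {0..T}\<close> c(1) _ c(3)] q s by simp
    ultimately show False
      using finite_measure.emeasure_eq_measure[OF \<open>finite_measure \<mu>\<close>] by simp
  qed
  with g show "g \<in> {g \<in> mspace (path_space T Dom). \<forall>s\<in>{0..\<tau>}. g s = x s}"
    by simp
qed

lemma agreeing_subset_supp_of:
  fixes x :: "real \<Rightarrow> 'b::real_normed_vector" and \<mu> :: "(real \<Rightarrow> 'b) measure"
  assumes "0 < T" "open Dom"
    and "finite_measure \<mu>" and sets: "sets \<mu> = sets (borel_of_top (mtopology_of (path_space T Dom)))"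
    and x: "continuous_on {0..T} x" "\<forall>s\<in>{0..T}. x s \<in> Dom" and \<tau>: "\<tau> \<in> {0..T}"
    and dense: "\<And>y e. 0 < e \<Longrightarrow> \<exists>d\<in>D. dist y d < e"
    and charged: "\<And>N cs k t. cs \<in> lists D \<Longrightarrow> t \<in> (\<rat> \<inter> {0..T}) \<union> {T} \<Longrightarrow> \<tau> \<le> t \<Longrightarrow>
      (\<exists>h\<in>grid_nbhd T Dom N cs (1 / real (Suc k)). \<forall>s\<in>{0..t}. h s = x s) \<Longrightarrow>
      measure \<mu> (grid_nbhd T Dom N cs (1 / real (Suc k))) \<noteq> 0"
  shows "{g \<in> mspace (path_space T Dom). \<forall>s\<in>{0..\<tau>}. g s = x s} \<subseteq>
    supp_of (mtopology_of (path_space T Dom)) \<mu>"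
proof
  fix g assume "g \<in> {g \<in> mspace (path_space T Dom). \<forall>s\<in>{0..\<tau>}. g s = x s}"
  then have g: "g \<in> mspace (path_space T Dom)" and agree: "\<forall>s\<in>{0..\<tau>}. g s = x s"
    by auto
  have "0 < emeasure \<mu> U" if U: "openin (mtopology_of (path_space T Dom)) U" "g \<in> U" for U
  proof -
    obtain r where "r > 0"
      and r: "\<And>h. h \<in> mspace (path_space T Dom) \<Longrightarrow> mdist (path_space T Dom) g h < r \<Longrightarrow> h \<in> U"
      using U unfolding openin_path_space by blast
    obtain N cs k where cs: "cs \<in> lists D" and gW: "g \<in> grid_nbhd T Dom N cs (1 / real (Suc k))"
      and W_ball: "\<And>h. h \<in> grid_nbhd T Dom N cs (1 / real (Suc k)) \<Longrightarrow> mdist (path_space T Dom) g h < r"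
      using grid_nbhds_local_base[OF \<open>0 < T\<close> g \<open>r > 0\<close> dense] by metis
    define W where "W = grid_nbhd T Dom N cs (1 / real (Suc k))"
    have W_open: "openin (mtopology_of (path_space T Dom)) W"
      unfolding W_def using \<open>0 < T\<close> by (intro openin_grid_nbhd) simp
    then obtain \<rho> where "\<rho> > 0"
      and \<rho>: "\<And>h. h \<in> mspace (path_space T Dom) \<Longrightarrow> mdist (path_space T Dom) g h < \<rho> \<Longrightarrow> h \<in> W"
      using gW unfolding openin_path_space W_def by blast
    obtain t h where t: "t \<in> (\<rat> \<inter> {0..T}) \<union> {T}" "\<tau> \<le> t"
      and h: "h \<in> mspace (path_space T Dom)" "mdist (path_space T Dom) g h < \<rho>" "\<forall>s\<in>{0..t}. h s = x s"
      using path_agreeing_beyond[OF \<open>open Dom\<close> x g agree \<tau> \<open>\<rho> > 0\<close>] by metis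
    have "measure \<mu> W \<noteq> 0"
      using charged[OF cs t] \<rho>[OF h(1,2)] h(3) unfolding W_def by blast
    then have "0 < emeasure \<mu> W"
      using finite_measure.emeasure_eq_measure[OF \<open>finite_measure \<mu>\<close>] measure_nonneg[of \<mu> W]
      by (simp add: order_less_le)
    also have "emeasure \<mu> W \<le> emeasure \<mu> U"
    proof (rule emeasure_mono)
      show "W \<subseteq> U"
        using r W_ball unfolding W_def by (auto simp: grid_nbhd_def)
      show "U \<in> sets \<mu>"
        unfolding sets using U(1) by (rule openin_imp_sets_borel_of_top)
    qed
    finally show ?thesis .
  qed
  then show "g \<in> supp_of (mtopology_of (path_space T Dom)) \<mu>"
    using g by (auto simp: supp_of_def)
qed

section \<open>The conditional law of a path given \<open>F\<^sub>\<tau>\<close>\<close>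

locale conditional_path_law = prob_space M + filtration "space M" F
  for M :: "'a measure" and F :: "real \<Rightarrow> 'a measure" +
  fixes T :: real and Dom :: "'b::euclidean_space set" and S :: "real \<Rightarrow> 'a \<Rightarrow> 'b"
    and \<tau> :: "'a \<Rightarrow> real" and Q :: "'a \<Rightarrow> (real \<Rightarrow> 'b) measure"
  assumes subalgebra_F: "\<And>t. subalgebra M (F t)"
    and paths: "\<forall>\<omega>\<in>space M. continuous_on {0..T} (\<lambda>t. S t \<omega>) \<and> (\<forall>t\<in>{0..T}. S t \<omega> \<in> Dom)"
    and adapted: "\<forall>t\<in>{0..T}. (\<lambda>\<omega>. S t \<omega>) \<in> borel_measurable (F t)"
    and path_measurable: "path_of T S \<in> measurable M (borel_of_top (mtopology_of (path_space T Dom)))"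
    and stopping: "stopping_time F \<tau>"
    and \<tau>_range: "\<forall>\<omega>\<in>space M. \<tau> \<omega> \<in> {0..T}"
    and regular: "regular_cond_dist M (pre_sigma \<tau>) (path_of T S)
      (borel_of_top (mtopology_of (path_space T Dom))) Q"
begin

abbreviation agreeing_paths :: "real \<Rightarrow> 'a \<Rightarrow> (real \<Rightarrow> 'b) set"
  where "agreeing_paths t \<omega> \<equiv> {g \<in> mspace (path_space T Dom). \<forall>s\<in>{0..t}. g s = S s \<omega>}"

lemma subalgebra_pre_sigma_\<tau>: "subalgebra M (pre_sigma \<tau>)"
  using \<tau>_range by (intro subalgebra_pre_sigma[OF stopping subalgebra_F]) auto

lemma finite_measure_Q:
  assumes "\<omega> \<in> space M"
  shows "finite_measure (Q \<omega>)" "sets (Q \<omega>) = sets (borel_of_top (mtopology_of (path_space T Dom)))"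
  using regular assms by (auto simp: regular_cond_dist_def prob_space_def)

lemma AE_path_eval_balls_null:
  assumes "countable D"
  shows "AE \<omega> in M. \<forall>q\<in>\<rat> \<inter> {0..T}. \<forall>c\<in>D. \<forall>k. q \<le> \<tau> \<omega> \<and> 2 / real (Suc k) \<le> dist (S q \<omega>) c \<longrightarrow>
    measure (Q \<omega>) (path_eval_ball T Dom q c (1 / real (Suc k))) = 0"
proof -
  have "AE \<omega> in M. q \<le> \<tau> \<omega> \<and> 2 / real (Suc k) \<le> dist (S q \<omega>) c \<longrightarrow>
      measure (Q \<omega>) (path_eval_ball T Dom q c (1 / real (Suc k))) = 0"
    if q: "q \<in> {0..T}" for q c k
  proof -
    define A where "A = {\<omega>\<in>space M. 2 / real (Suc k) \<le> dist (S q \<omega>) c \<and> q \<le> \<tau> \<omega>}"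
    have [measurable]: "(\<lambda>\<omega>. S q \<omega>) \<in> borel_measurable (F q)"
      using adapted q by blast
    have "{\<omega>\<in>space (F q). 2 / real (Suc k) \<le> dist (S q \<omega>) c} \<in> sets (F q)"
      by measurable
    then have "{\<omega> \<in> {\<omega>\<in>space M. 2 / real (Suc k) \<le> dist (S q \<omega>) c}. q \<le> \<tau> \<omega>} \<in> sets (pre_sigma \<tau>)"
      unfolding space_F by (rule sets_pre_sigma_ge_const[OF stopping])
    also have "{\<omega> \<in> {\<omega>\<in>space M. 2 / real (Suc k) \<le> dist (S q \<omega>) c}. q \<le> \<tau> \<omega>} = A"
      by (auto simp: A_def)
    finally have "A \<in> sets (pre_sigma \<tau>)" .
    moreover have "{\<omega>\<in>A. path_of T S \<omega> \<in> path_eval_ball T Dom q c (1 / real (Suc k))} = {}"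
      using q divide_right_mono[of 1 2 "real (Suc k)"]
      by (fastforce simp: A_def path_eval_ball_def path_of_def)
    then have "measure M {\<omega>\<in>A. path_of T S \<omega> \<in> path_eval_ball T Dom q c (1 / real (Suc k))} = 0"
      by (metis measure_empty)
    ultimately have "AE \<omega> in M. \<omega> \<in> A \<longrightarrow> measure (Q \<omega>) (path_eval_ball T Dom q c (1 / real (Suc k))) = 0"
      using q by (intro regular_cond_dist_AE_zero[OF subalgebra_pre_sigma_\<tau> regular path_measurable]
          openin_imp_sets_borel_of_top openin_path_eval_ball) auto
    then show ?thesis
      using AE_space by eventually_elim (auto simp: A_def)
  qed
  then show ?thesis
    using assms by (simp add: AE_ball_countable AE_all_countable countable_rat)
qed

lemma AE_supp_subset_agreeing_paths:
  "AE \<omega> in M. supp_of (mtopology_of (path_space T Dom)) (Q \<omega>) \<subseteq> agreeing_paths (\<tau> \<omega>) \<omega>"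
proof -
  obtain D :: "'b set" where "countable D" and D: "\<And>X. open X \<Longrightarrow> X \<noteq> {} \<Longrightarrow> \<exists>d\<in>D. d \<in> X"
    using countable_dense_setE by blast
  have dense: "\<exists>d\<in>D. dist y d < e" if "0 < e" for y and e :: real
    using D[of "ball y e"] that by (auto simp: dist_commute)
  show ?thesis
    using AE_path_eval_balls_null[OF \<open>countable D\<close>] AE_space
  proof eventually_elim
    case (elim \<omega>)
    then show ?case
      using paths \<tau>_range finite_measure_Q[of \<omega>]
      by (intro supp_of_subset_agreeing[OF _ _ _ _ dense, where x = "\<lambda>t. S t \<omega>"]) auto
  qed
qed

lemma AE_null_open_avoids_agreeing_paths:
  assumes full: "cond_full_support M F T Dom S"
    and W: "openin (mtopology_of (path_space T Dom)) W" and t: "t \<in> {0..T}"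
  shows "AE \<omega> in M. measure (Q \<omega>) W = 0 \<and> \<tau> \<omega> \<le> t \<longrightarrow> \<not> (\<exists>g\<in>W. \<forall>s\<in>{0..t}. g s = S s \<omega>)"
proof -
  have W_sets: "W \<in> sets (borel_of_top (mtopology_of (path_space T Dom)))"
    using W by (rule openin_imp_sets_borel_of_top)
  define C where "C = {\<omega>\<in>space M. measure (Q \<omega>) W = 0 \<and> \<tau> \<omega> \<le> t}"
  define E where "E = {\<omega>\<in>space M. path_of T S \<omega> \<in> W}"
  have [measurable]: "(\<lambda>\<omega>. measure (Q \<omega>) W) \<in> borel_measurable (pre_sigma \<tau>)"
    using regular W_sets unfolding regular_cond_dist_def by blast
  have Z: "{\<omega>\<in>space (pre_sigma \<tau>). measure (Q \<omega>) W = 0} \<in> sets (pre_sigma \<tau>)"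
    by measurable
  then have "{\<omega> \<in> {\<omega>\<in>space M. measure (Q \<omega>) W = 0}. \<tau> \<omega> \<le> t} \<in> sets (F t)"
    unfolding space_pre_sigma by (rule sets_pre_sigmaD[OF stopping])
  also have "{\<omega> \<in> {\<omega>\<in>space M. measure (Q \<omega>) W = 0}. \<tau> \<omega> \<le> t} = C"
    by (auto simp: C_def)
  finally have C_F: "C \<in> sets (F t)" .
  have E_M: "E \<in> sets M"
    using path_measurable W_sets unfolding E_def by measurable
  have "{\<omega>\<in>space M. measure (Q \<omega>) W = 0} \<in> sets M"
    using Z subalgebra_pre_sigma_\<tau> by (auto simp: subalgebra_def space_pre_sigma)
  then have "{\<omega>\<in>space M. measure (Q \<omega>) W = 0 \<and> path_of T S \<omega> \<in> W} \<in> sets M"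
    using E_M unfolding E_def by (simp add: Collect_conj_eq[symmetric] sets.Int)
  then have "measure M (C \<inter> E) \<le> measure M {\<omega>\<in>space M. measure (Q \<omega>) W = 0 \<and> path_of T S \<omega> \<in> W}"
    by (intro finite_measure_mono) (auto simp: C_def E_def)
  also have "\<dots> = 0"
    by (rule regular_cond_dist_null_where_zero[OF subalgebra_pre_sigma_\<tau> regular path_measurable W_sets])
  finally have "measure M (C \<inter> E) = 0"
    using measure_nonneg[of M "C \<inter> E"] by linarith
  then have "AE \<omega> in M. \<omega> \<in> C \<longrightarrow> real_cond_exp M (F t) (indicator E) \<omega> = 0"
    by (rule real_cond_exp_indicator_AE_zero[OF subalgebra_F C_F E_M])
  moreover have "AE \<omega> in M. (\<exists>g\<in>W. \<forall>s\<in>{0..t}. g s = S s \<omega>) \<longrightarrow> real_cond_exp M (F t) (indicator E) \<omega> > 0"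
    using full W t unfolding cond_full_support_def E_def by blast
  ultimately show ?thesis
    using AE_space by eventually_elim (auto simp: C_def)
qed

lemma AE_agreeing_paths_subset_supp:
  assumes "0 < T" "open Dom" and full: "cond_full_support M F T Dom S"
  shows "AE \<omega> in M. agreeing_paths (\<tau> \<omega>) \<omega> \<subseteq> supp_of (mtopology_of (path_space T Dom)) (Q \<omega>)"
proof -
  obtain D :: "'b set" where "countable D" and D: "\<And>X. open X \<Longrightarrow> X \<noteq> {} \<Longrightarrow> \<exists>d\<in>D. d \<in> X"
    using countable_dense_setE by blast
  have dense: "\<exists>d\<in>D. dist y d < e" if "0 < e" for y and e :: real
    using D[of "ball y e"] that by (auto simp: dist_commute)
  let ?times = "(\<rat> \<inter> {0..T}) \<union> {T}"
  have "countable ?times"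
    by (simp add: countable_rat)
  have avoids: "AE \<omega> in M. measure (Q \<omega>) (grid_nbhd T Dom N cs (1 / real (Suc k))) = 0 \<and> \<tau> \<omega> \<le> t \<longrightarrow>
      \<not> (\<exists>h\<in>grid_nbhd T Dom N cs (1 / real (Suc k)). \<forall>s\<in>{0..t}. h s = S s \<omega>)"
    if "t \<in> ?times" for N cs k t
    using that \<open>0 < T\<close> by (intro AE_null_open_avoids_agreeing_paths[OF full] openin_grid_nbhd) auto
  have "AE \<omega> in M. \<forall>N. \<forall>cs\<in>lists D. \<forall>k. \<forall>t\<in>?times.
      measure (Q \<omega>) (grid_nbhd T Dom N cs (1 / real (Suc k))) = 0 \<and> \<tau> \<omega> \<le> t \<longrightarrow>
      \<not> (\<exists>h\<in>grid_nbhd T Dom N cs (1 / real (Suc k)). \<forall>s\<in>{0..t}. h s = S s \<omega>)"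
    using \<open>countable D\<close> \<open>countable ?times\<close> avoids
    by (simp only: AE_ball_countable AE_all_countable countable_lists) blast
  then show ?thesis
    using AE_space
  proof eventually_elim
    case (elim \<omega>)
    show ?case
    proof (rule agreeing_subset_supp_of[OF assms(1,2) finite_measure_Q[OF elim(2)] _ _ _ dense,
          where x = "\<lambda>t. S t \<omega>"])
      fix N cs k t
      assume "cs \<in> lists D" "t \<in> ?times" "\<tau> \<omega> \<le> t"
        "\<exists>h\<in>grid_nbhd T Dom N cs (1 / real (Suc k)). \<forall>s\<in>{0..t}. h s = S s \<omega>"
      then show "measure (Q \<omega>) (grid_nbhd T Dom N cs (1 / real (Suc k))) \<noteq> 0"
        using elim(1) \<open>cs \<in> lists D\<close> \<open>t \<in> ?times\<close> by blast
    qed (use paths \<tau>_range elim(2) in auto)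
  qed
qed

end

theorem corollary1:
  fixes M :: "'a measure" and F :: "real \<Rightarrow> 'a measure" and T :: real
    and Dom :: "(real ^ 'n) set" and S :: "real \<Rightarrow> 'a \<Rightarrow> real ^ 'n"
    and \<tau> :: "'a \<Rightarrow> real" and Q :: "'a \<Rightarrow> (real \<Rightarrow> real ^ 'n) measure"
  assumes "T > 0"
    and "prob_space M"
    and "filtration (space M) F"
    and "\<And>t. subalgebra M (F t)"
    and "usual_conditions M F T"
    and "\<forall>A\<in>sets (F 0). measure M A = 0 \<or> measure M A = 1"
    and "open Dom"
    and "\<forall>\<omega>\<in>space M. continuous_on {0..T} (\<lambda>t. S t \<omega>) \<and> (\<forall>t\<in>{0..T}. S t \<omega> \<in> Dom)"
    and "\<forall>t\<in>{0..T}. (\<lambda>\<omega>. S t \<omega>) \<in> borel_measurable (F t)"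
    and "path_of T S \<in> measurable M (borel_of_top (mtopology_of (path_space T Dom)))"
    and "cond_full_support M F T Dom S"
    and "stopping_time F \<tau>"
    and "\<forall>\<omega>\<in>space M. \<tau> \<omega> \<in> {0..T}"
    and "regular_cond_dist M (filtration.pre_sigma (space M) F \<tau>) (path_of T S)
           (borel_of_top (mtopology_of (path_space T Dom))) Q"
  shows "AE \<omega> in M. supp_of (mtopology_of (path_space T Dom)) (Q \<omega>) =
           {g \<in> mspace (path_space T Dom). \<forall>s\<in>{0..\<tau> \<omega>}. g s = S s \<omega>}"
proof -
  interpret conditional_path_law M F T Dom S \<tau> Q
    using assms(2-4,8-10,12-14) by (simp add: conditional_path_law_def conditional_path_law_axioms_def)
  show ?thesis
    using AE_supp_subset_agreeing_paths AE_agreeing_paths_subset_supp[OF assms(1,7,11)]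
    by eventually_elim (rule equalityI)
qed

end
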